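(* Let $F$ and $G$ be objects in $\overline{\mathrm{Pro}}(\mathcal{C})$. Then every connected component of the poset of 1-morphisms from $F$ to $G$ (that is, every morphism from $F$ to $G$ in $\overline{\mathrm{Pro}}(\mathcal{C})$) is directed.
   Context: Let $\mathcal{C}$ be a category. Objects of $\overline{\mathrm{Pro}}(\mathcal{C})$ are diagrams $F:A\to\mathcal{C}$ with $A$ a cofinite directed poset of infinite height (poset as category with $u\to v$ iff $u\ge v$; cofinite: each $\{z\le x\}$ finite; infinite height: every element has a strictly larger one). A 1-morphism $F^A\to G^B$ is a pair $(\alpha,\phi)$ with $\alpha:B\to A$ strictly increasing and $\phi:F\circ\alpha\to G$ a natural transformation; 1-morphisms are partially ordered by $(\alpha',\phi')\geq(\alpha,\phi)$ iff $\alpha'(b)\ge\alpha(b)$ and $\phi'_b=\phi_b\circ F(\alpha'(b)\to\alpha(b))$ for all $b\in B$. Morphisms $F\to G$ in $\overline{\mathrm{Pro}}(\mathcal{C})$ are the connected components of this poset. *)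

theory Defs
  imports Main
begin

record ('o,'m) cat =
  Ob  :: "'o set"
  Hom :: "'o \<Rightarrow> 'o \<Rightarrow> 'm set"
  cmp :: "'m \<Rightarrow> 'm \<Rightarrow> 'm"
  idm :: "'o \<Rightarrow> 'm"

definition category :: "('o,'m) cat \<Rightarrow> bool" where
  "category C \<longleftrightarrow>
     (\<forall>x\<in>Ob C. idm C x \<in> Hom C x x) \<and>
     (\<forall>x\<in>Ob C. \<forall>y\<in>Ob C. \<forall>z\<in>Ob C. \<forall>f\<in>Hom C x y. \<forall>g\<in>Hom C y z. cmp C g f \<in> Hom C x z) \<and>
     (\<forall>x\<in>Ob C. \<forall>y\<in>Ob C. \<forall>f\<in>Hom C x y. cmp C f (idm C x) = f \<and> cmp C (idm C y) f = f) \<and>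
     (\<forall>w\<in>Ob C. \<forall>x\<in>Ob C. \<forall>y\<in>Ob C. \<forall>z\<in>Ob C. \<forall>f\<in>Hom C w x. \<forall>g\<in>Hom C x y. \<forall>h\<in>Hom C y z.
        cmp C h (cmp C g f) = cmp C (cmp C h g) f)"

text \<open>A diagram: index set with order relation dle, and a functor from the poset
  (viewed as a category with an arrow u \<rightarrow> v iff u \<ge> v) to C.
  arr D u v is the image of the arrow u \<rightarrow> v (for dle D v u).\<close>

record ('a,'o,'m) diag =
  Idx :: "'a set"
  dle :: "'a \<Rightarrow> 'a \<Rightarrow> bool"
  obj :: "'a \<Rightarrow> 'o"
  arr :: "'a \<Rightarrow> 'a \<Rightarrow> 'm"

definition dless :: "('a,'o,'m) diag \<Rightarrow> 'a \<Rightarrow> 'a \<Rightarrow> bool" where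
  "dless D u v \<longleftrightarrow> dle D u v \<and> u \<noteq> v"

definition partial_order_on' :: "'a set \<Rightarrow> ('a \<Rightarrow> 'a \<Rightarrow> bool) \<Rightarrow> bool" where
  "partial_order_on' A le \<longleftrightarrow>
     (\<forall>x\<in>A. le x x) \<and>
     (\<forall>x\<in>A. \<forall>y\<in>A. le x y \<and> le y x \<longrightarrow> x = y) \<and>
     (\<forall>x\<in>A. \<forall>y\<in>A. \<forall>z\<in>A. le x y \<and> le y z \<longrightarrow> le x z)"

definition directed_on :: "'a set \<Rightarrow> ('a \<Rightarrow> 'a \<Rightarrow> bool) \<Rightarrow> bool" where
  "directed_on S le \<longleftrightarrow> S \<noteq> {} \<and> (\<forall>x\<in>S. \<forall>y\<in>S. \<exists>z\<in>S. le x z \<and> le y z)"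

definition cofinite_directed_infinite_height :: "'a set \<Rightarrow> ('a \<Rightarrow> 'a \<Rightarrow> bool) \<Rightarrow> bool" where
  "cofinite_directed_infinite_height A le \<longleftrightarrow>
     partial_order_on' A le \<and> directed_on A le \<and>
     (\<forall>x\<in>A. finite {z\<in>A. le z x}) \<and>
     (\<forall>x\<in>A. \<exists>y\<in>A. le x y \<and> x \<noteq> y)"

definition diagram :: "('o,'m) cat \<Rightarrow> ('a,'o,'m) diag \<Rightarrow> bool" where
  "diagram C D \<longleftrightarrow>
     (\<forall>u\<in>Idx D. obj D u \<in> Ob C) \<and>
     (\<forall>u\<in>Idx D. \<forall>v\<in>Idx D. dle D v u \<longrightarrow> arr D u v \<in> Hom C (obj D u) (obj D v)) \<and>
     (\<forall>u\<in>Idx D. arr D u u = idm C (obj D u)) \<and>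
     (\<forall>u\<in>Idx D. \<forall>v\<in>Idx D. \<forall>w\<in>Idx D. dle D v u \<and> dle D w v \<longrightarrow>
        cmp C (arr D v w) (arr D u v) = arr D u w)"

definition pro_obj :: "('o,'m) cat \<Rightarrow> ('a,'o,'m) diag \<Rightarrow> bool" where
  "pro_obj C D \<longleftrightarrow> cofinite_directed_infinite_height (Idx D) (dle D) \<and> diagram C D"

definition one_mor ::
  "('o,'m) cat \<Rightarrow> ('a,'o,'m) diag \<Rightarrow> ('b,'o,'m) diag \<Rightarrow> ('b \<Rightarrow> 'a) \<times> ('b \<Rightarrow> 'm) \<Rightarrow> bool" where
  "one_mor C F G m \<longleftrightarrow> (case m of (\<alpha>, \<phi>) \<Rightarrow>
     (\<forall>b\<in>Idx G. \<alpha> b \<in> Idx F) \<and>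
     (\<forall>b\<in>Idx G. \<forall>b'\<in>Idx G. dless G b b' \<longrightarrow> dless F (\<alpha> b) (\<alpha> b')) \<and>
     (\<forall>b\<in>Idx G. \<phi> b \<in> Hom C (obj F (\<alpha> b)) (obj G b)) \<and>
     (\<forall>b\<in>Idx G. \<forall>b'\<in>Idx G. dle G b' b \<longrightarrow>
        cmp C (arr G b b') (\<phi> b) = cmp C (\<phi> b') (arr F (\<alpha> b) (\<alpha> b'))))"

definition mor_le ::
  "('o,'m) cat \<Rightarrow> ('a,'o,'m) diag \<Rightarrow> ('b,'o,'m) diag \<Rightarrow>
   ('b \<Rightarrow> 'a) \<times> ('b \<Rightarrow> 'm) \<Rightarrow> ('b \<Rightarrow> 'a) \<times> ('b \<Rightarrow> 'm) \<Rightarrow> bool" where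
  "mor_le C F G m m' \<longleftrightarrow> (case m of (\<alpha>, \<phi>) \<Rightarrow> case m' of (\<alpha>', \<phi>') \<Rightarrow>
     (\<forall>b\<in>Idx G. dle F (\<alpha> b) (\<alpha>' b) \<and> \<phi>' b = cmp C (\<phi> b) (arr F (\<alpha>' b) (\<alpha> b))))"

definition mor_connected ::
  "('o,'m) cat \<Rightarrow> ('a,'o,'m) diag \<Rightarrow> ('b,'o,'m) diag \<Rightarrow>
   ('b \<Rightarrow> 'a) \<times> ('b \<Rightarrow> 'm) \<Rightarrow> ('b \<Rightarrow> 'a) \<times> ('b \<Rightarrow> 'm) \<Rightarrow> bool" where
  "mor_connected C F G = (\<lambda>m m'. one_mor C F G m \<and> one_mor C F G m' \<and>
      (mor_le C F G m m' \<or> mor_le C F G m' m))\<^sup>*\<^sup>*"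

definition mor_components ::
  "('o,'m) cat \<Rightarrow> ('a,'o,'m) diag \<Rightarrow> ('b,'o,'m) diag \<Rightarrow> (('b \<Rightarrow> 'a) \<times> ('b \<Rightarrow> 'm)) set set" where
  "mor_components C F G =
     {{m'. mor_connected C F G m m'} | m. one_mor C F G m}"

end

theory Submission
  imports Defs
begin

text \<open>Two 1-morphisms \<open>(\<alpha>\<^sub>1, \<phi>\<^sub>1), (\<alpha>\<^sub>2, \<phi>\<^sub>2)\<close> lying above a common \<open>(\<alpha>, \<phi>)\<close> have a
  common upper bound: choose a strictly increasing \<open>\<gamma> : B \<rightarrow> A\<close> dominating \<open>\<alpha>\<^sub>1\<close> and \<open>\<alpha>\<^sub>2\<close>,
  by well-founded recursion on the cofinite poset \<open>B\<close> (each value is a strict upper bound of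
  finitely many earlier ones, which exists as \<open>A\<close> is directed of infinite height), and take
  \<open>(\<gamma>, \<phi> \<circ> F(\<gamma> \<rightarrow> \<alpha>))\<close>. In a preorder where every span closes up like this, induction along
  a zigzag shows that any two elements of a connected component have a common upper bound.\<close>

lemma wf_recursive_choice:
  assumes "wf R"
    and locality: "\<And>g g' x a. (\<And>y. (y, x) \<in> R \<Longrightarrow> g y = g' y) \<Longrightarrow> Q g x a \<longleftrightarrow> Q g' x a"
    and step: "\<And>g x. (\<And>y. (y, x) \<in> R \<Longrightarrow> Q g y (g y)) \<Longrightarrow> \<exists>a. Q g x a"
  shows "\<exists>g. \<forall>x. Q g x (g x)"
proof -
  define g where "g = wfrec R (\<lambda>g x. SOME a. Q g x a)"
  have "Q g x (g x)" for x
    using \<open>wf R\<close>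
  proof (induction x rule: wf_induct_rule)
    case (less x)
    have cut_eq: "Q (cut g R x) x a \<longleftrightarrow> Q g x a" for a
      by (rule locality) (simp add: cut_apply)
    have "\<exists>a. Q (cut g R x) x a"
      using step[where g = g and x = x] less.IH cut_eq by blast
    then have "Q (cut g R x) x (SOME a. Q (cut g R x) x a)"
      by (rule someI_ex)
    then show ?case
      using cut_eq wfrec[OF \<open>wf R\<close>, of "\<lambda>g x. SOME a. Q g x a" x] by (simp add: g_def)
  qed
  then show ?thesis by blast
qed

lemma partial_order_on'D:
  assumes "partial_order_on' A le"
  shows partial_order_on'_refl: "x \<in> A \<Longrightarrow> le x x"
    and partial_order_on'_antisym: "x \<in> A \<Longrightarrow> y \<in> A \<Longrightarrow> le x y \<Longrightarrow> le y x \<Longrightarrow> x = y"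
    and partial_order_on'_trans: "x \<in> A \<Longrightarrow> y \<in> A \<Longrightarrow> z \<in> A \<Longrightarrow> le x y \<Longrightarrow> le y z \<Longrightarrow> le x z"
  using assms unfolding partial_order_on'_def by blast+

lemma directed_on_finite_upper_bound:
  assumes order: "partial_order_on' A le" and directed: "directed_on A le"
  shows "finite S \<Longrightarrow> S \<subseteq> A \<Longrightarrow> \<exists>u\<in>A. \<forall>s\<in>S. le s u"
proof (induction S rule: finite_induct)
  case empty
  then show ?case using directed unfolding directed_on_def by blast
next
  case (insert x S)
  then obtain u where u: "u \<in> A" "\<forall>s\<in>S. le s u" by auto
  have "x \<in> A" using insert.prems by blast
  then obtain z where z: "z \<in> A" "le x z" "le u z"
    using directed u(1) unfolding directed_on_def by blast
  have "le s z" if "s \<in> S" for s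
    using partial_order_on'_trans[OF order, of s u z] that u z insert.prems by blast
  then show ?case using z by blast
qed

lemma directed_on_finite_strict_upper_bound:
  assumes order: "partial_order_on' A le" and directed: "directed_on A le"
    and unbounded: "\<forall>x\<in>A. \<exists>y\<in>A. le x y \<and> x \<noteq> y"
    and "finite S" and "S \<subseteq> A"
  shows "\<exists>y\<in>A. \<forall>s\<in>S. le s y \<and> s \<noteq> y"
proof -
  obtain u where u: "u \<in> A" "\<forall>s\<in>S. le s u"
    using directed_on_finite_upper_bound[OF order directed \<open>finite S\<close> \<open>S \<subseteq> A\<close>] by blast
  obtain y where y: "y \<in> A" "le u y" "u \<noteq> y" using unbounded u(1) by blast
  have "le s y \<and> s \<noteq> y" if "s \<in> S" for s
  proof
    have "s \<in> A" "le s u" using that u \<open>S \<subseteq> A\<close> by blast+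
    then show "le s y" using partial_order_on'_trans[OF order _ u(1) y(1)] y(2) by blast
    show "s \<noteq> y"
      using partial_order_on'_antisym[OF order u(1) y(1) y(2)] \<open>le s u\<close> y(3) by blast
  qed
  then show ?thesis using y(1) by blast
qed

lemma strict_mono_majorant:
  assumes order_A: "partial_order_on' A leA" and directed_A: "directed_on A leA"
    and unbounded_A: "\<forall>x\<in>A. \<exists>y\<in>A. leA x y \<and> x \<noteq> y"
    and order_B: "partial_order_on' B leB" and finite_B: "\<forall>x\<in>B. finite {z\<in>B. leB z x}"
    and f: "f ` B \<subseteq> A"
  obtains \<gamma> where "\<And>b. b \<in> B \<Longrightarrow> \<gamma> b \<in> A \<and> leA (f b) (\<gamma> b)"
    and "\<And>b b'. b \<in> B \<Longrightarrow> b' \<in> B \<Longrightarrow> leB b b' \<Longrightarrow> b \<noteq> b' \<Longrightarrow> leA (\<gamma> b) (\<gamma> b') \<and> \<gamma> b \<noteq> \<gamma> b'"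
proof -
  define R where "R = {(b', b). b' \<in> B \<and> b \<in> B \<and> leB b' b \<and> b' \<noteq> b}"
  have segments: "finite {y. (y, x) \<in> R}" for x
  proof (cases "x \<in> B")
    case True
    then show ?thesis
      using finite_B by (rule_tac finite_subset[of _ "{z\<in>B. leB z x}"]) (auto simp: R_def)
  qed (simp add: R_def)
  have "wf R"
  proof (rule wf_finite_segments)
    show "irrefl R" unfolding R_def irrefl_def by blast
    show "trans R"
      using partial_order_on'_trans[OF order_B] partial_order_on'_antisym[OF order_B]
      unfolding R_def trans_def by blast
    show "finite {y. (y, x) \<in> R}" for x by fact
  qed
  define Q where "Q g b a \<longleftrightarrow> b \<in> B \<longrightarrow>
      a \<in> A \<and> leA (f b) a \<and> (\<forall>b'. (b', b) \<in> R \<longrightarrow> leA (g b') a \<and> g b' \<noteq> a)" for g b a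
  have "\<exists>\<gamma>. \<forall>b. Q \<gamma> b (\<gamma> b)"
  proof (rule wf_recursive_choice[OF \<open>wf R\<close>])
    show "Q g b a \<longleftrightarrow> Q g' b a" if "\<And>b'. (b', b) \<in> R \<Longrightarrow> g b' = g' b'" for g g' b a
      using that unfolding Q_def by auto
  next
    fix g b
    assume IH: "\<And>b'. (b', b) \<in> R \<Longrightarrow> Q g b' (g b')"
    show "\<exists>a. Q g b a"
    proof (cases "b \<in> B")
      case True
      let ?S = "insert (f b) (g ` {b'. (b', b) \<in> R})"
      have "finite ?S" using segments by blast
      moreover have "?S \<subseteq> A"
        using IH f True unfolding Q_def R_def by auto
      ultimately obtain y where "y \<in> A" "\<forall>s\<in>?S. leA s y \<and> s \<noteq> y"
        using directed_on_finite_strict_upper_bound[OF order_A directed_A unbounded_A] by blast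
      then have "Q g b y" unfolding Q_def by blast
      then show ?thesis by blast
    qed (simp add: Q_def)
  qed
  then obtain \<gamma> where \<gamma>: "\<And>b. Q \<gamma> b (\<gamma> b)" by blast
  show ?thesis
  proof (rule that)
    show "\<gamma> b \<in> A \<and> leA (f b) (\<gamma> b)" if "b \<in> B" for b
      using \<gamma>[of b] that unfolding Q_def by blast
    show "leA (\<gamma> b) (\<gamma> b') \<and> \<gamma> b \<noteq> \<gamma> b'" if "b \<in> B" "b' \<in> B" "leB b b'" "b \<noteq> b'" for b b'
      using \<gamma>[of b'] that unfolding Q_def R_def by blast
  qed
qed

locale amalgamating_preorder =
  fixes P :: "'a \<Rightarrow> bool" and le :: "'a \<Rightarrow> 'a \<Rightarrow> bool"
  assumes le_refl: "P x \<Longrightarrow> le x x"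
    and le_trans: "P x \<Longrightarrow> P y \<Longrightarrow> P z \<Longrightarrow> le x y \<Longrightarrow> le y z \<Longrightarrow> le x z"
    and amalgamation: "P x \<Longrightarrow> P a \<Longrightarrow> P b \<Longrightarrow> le x a \<Longrightarrow> le x b \<Longrightarrow>
      \<exists>c. P c \<and> le a c \<and> le b c"
begin

definition zigzag :: "'a \<Rightarrow> 'a \<Rightarrow> bool" where
  "zigzag = (\<lambda>u v. P u \<and> P v \<and> (le u v \<or> le v u))\<^sup>*\<^sup>*"

lemma zigzag_common_upper_bound:
  assumes "zigzag x y" and "P x"
  shows "P y \<and> (\<exists>z. P z \<and> le x z \<and> le y z)"
  using assms(1) unfolding zigzag_def
proof (induction rule: rtranclp_induct)
  case base
  then show ?case using \<open>P x\<close> le_refl by blast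
next
  case (step y y')
  then obtain z where z: "P z" "le x z" "le y z" by blast
  have "P y" "P y'" using step.hyps(2) by blast+
  from step.hyps(2) consider "le y y'" | "le y' y" by blast
  then show ?case
  proof cases
    case 1
    then obtain w where w: "P w" "le z w" "le y' w"
      using amalgamation[OF \<open>P y\<close> z(1) \<open>P y'\<close> z(3)] by blast
    then show ?thesis using le_trans[OF \<open>P x\<close> z(1) w(1) z(2)] \<open>P y'\<close> by blast
  next
    case 2
    then show ?thesis using le_trans[OF \<open>P y'\<close> \<open>P y\<close> z(1) 2 z(3)] z \<open>P y'\<close> by blast
  qed
qed

lemma directed_on_zigzag_component:
  assumes "P x"
  shows "directed_on {y. zigzag x y} le"
  unfolding directed_on_def
proof (intro conjI ballI)
  show "{y. zigzag x y} \<noteq> {}" by (auto simp: zigzag_def)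
next
  fix y1 y2
  assume "y1 \<in> {y. zigzag x y}" "y2 \<in> {y. zigzag x y}"
  then obtain z1 z2 where
    z1: "P y1" "P z1" "le x z1" "le y1 z1" and z2: "P y2" "P z2" "le x z2" "le y2 z2"
    using zigzag_common_upper_bound \<open>P x\<close> by (metis mem_Collect_eq)
  obtain w where w: "P w" "le z1 w" "le z2 w"
    using amalgamation[OF \<open>P x\<close> z1(2) z2(2) z1(3) z2(3)] by blast
  have "le x w" using le_trans[OF \<open>P x\<close> z1(2) w(1) z1(3) w(2)] .
  then have "zigzag x w" using \<open>P x\<close> w(1) by (simp add: zigzag_def r_into_rtranclp)
  moreover have "le y1 w" "le y2 w"
    using le_trans[OF z1(1) z1(2) w(1) z1(4) w(2)] le_trans[OF z2(1) z2(2) w(1) z2(4) w(3)] .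
  ultimately show "\<exists>z\<in>{y. zigzag x y}. le y1 z \<and> le y2 z" by blast
qed

end

lemma category_cmp_hom:
  "category C \<Longrightarrow> x \<in> Ob C \<Longrightarrow> y \<in> Ob C \<Longrightarrow> z \<in> Ob C \<Longrightarrow> f \<in> Hom C x y \<Longrightarrow> g \<in> Hom C y z \<Longrightarrow>
    cmp C g f \<in> Hom C x z"
  unfolding category_def by blast

lemma category_cmp_idm_right:
  "category C \<Longrightarrow> x \<in> Ob C \<Longrightarrow> y \<in> Ob C \<Longrightarrow> f \<in> Hom C x y \<Longrightarrow> cmp C f (idm C x) = f"
  unfolding category_def by blast

lemma category_cmp_assoc:
  "category C \<Longrightarrow> w \<in> Ob C \<Longrightarrow> x \<in> Ob C \<Longrightarrow> y \<in> Ob C \<Longrightarrow> z \<in> Ob C \<Longrightarrow>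
    f \<in> Hom C w x \<Longrightarrow> g \<in> Hom C x y \<Longrightarrow> h \<in> Hom C y z \<Longrightarrow>
    cmp C h (cmp C g f) = cmp C (cmp C h g) f"
  unfolding category_def by blast

lemma diagramD:
  assumes "diagram C D"
  shows diagram_obj: "u \<in> Idx D \<Longrightarrow> obj D u \<in> Ob C"
    and diagram_arr: "u \<in> Idx D \<Longrightarrow> v \<in> Idx D \<Longrightarrow> dle D v u \<Longrightarrow> arr D u v \<in> Hom C (obj D u) (obj D v)"
    and diagram_arr_id: "u \<in> Idx D \<Longrightarrow> arr D u u = idm C (obj D u)"
    and diagram_arr_comp: "u \<in> Idx D \<Longrightarrow> v \<in> Idx D \<Longrightarrow> w \<in> Idx D \<Longrightarrow> dle D v u \<Longrightarrow> dle D w v \<Longrightarrow>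
      cmp C (arr D v w) (arr D u v) = arr D u w"
  using assms unfolding diagram_def by blast+

lemma one_morD:
  assumes "one_mor C F G (\<alpha>, \<phi>)"
  shows one_mor_Idx: "b \<in> Idx G \<Longrightarrow> \<alpha> b \<in> Idx F"
    and one_mor_strict: "b \<in> Idx G \<Longrightarrow> b' \<in> Idx G \<Longrightarrow> dless G b b' \<Longrightarrow> dless F (\<alpha> b) (\<alpha> b')"
    and one_mor_Hom: "b \<in> Idx G \<Longrightarrow> \<phi> b \<in> Hom C (obj F (\<alpha> b)) (obj G b)"
    and one_mor_natural: "b \<in> Idx G \<Longrightarrow> b' \<in> Idx G \<Longrightarrow> dle G b' b \<Longrightarrow>
      cmp C (arr G b b') (\<phi> b) = cmp C (\<phi> b') (arr F (\<alpha> b) (\<alpha> b'))"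
  using assms unfolding one_mor_def by auto

lemma mor_leD:
  assumes "mor_le C F G (\<alpha>, \<phi>) (\<alpha>', \<phi>')" and "b \<in> Idx G"
  shows "dle F (\<alpha> b) (\<alpha>' b)" and "\<phi>' b = cmp C (\<phi> b) (arr F (\<alpha>' b) (\<alpha> b))"
  using assms unfolding mor_le_def by auto

text \<open>The 1-morphism \<open>(\<gamma>, \<phi> \<circ> F(\<gamma> \<rightarrow> \<alpha>))\<close>; meaningful only when \<open>\<gamma> \<ge> \<alpha>\<close> pointwise,
  since otherwise \<open>arr F (\<gamma> b) (\<alpha> b)\<close> is unspecified.\<close>
definition reindex_mor ::
  "('o,'m) cat \<Rightarrow> ('a,'o,'m) diag \<Rightarrow> ('b \<Rightarrow> 'a) \<Rightarrow> ('b \<Rightarrow> 'm) \<Rightarrow> ('b \<Rightarrow> 'a) \<Rightarrow> ('b \<Rightarrow> 'a) \<times> ('b \<Rightarrow> 'm)"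
  where "reindex_mor C F \<alpha> \<phi> \<gamma> = (\<gamma>, \<lambda>b. cmp C (\<phi> b) (arr F (\<gamma> b) (\<alpha> b)))"

locale one_mor_context =
  fixes C :: "('o,'m) cat" and F :: "('a,'o,'m) diag" and G :: "('b,'o,'m) diag"
  assumes category: "category C" and diagram_F: "diagram C F" and diagram_G: "diagram C G"
    and order_F: "partial_order_on' (Idx F) (dle F)"
begin

lemma one_mor_mono:
  assumes "one_mor C F G (\<alpha>, \<phi>)" "b \<in> Idx G" "b' \<in> Idx G" "dle G b' b"
  shows "dle F (\<alpha> b') (\<alpha> b)"
proof (cases "b' = b")
  case True
  then show ?thesis using partial_order_on'_refl[OF order_F one_mor_Idx[OF assms(1,2)]] by simp
next
  case False
  then show ?thesis using one_mor_strict[OF assms(1,3,2)] assms(4) unfolding dless_def by blast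
qed

lemma cmp_arr_arr:
  assumes "x \<in> Ob C" "h \<in> Hom C (obj F w) x" "w \<in> Idx F" "u \<in> Idx F" "v \<in> Idx F"
    "dle F w u" "dle F u v"
  shows "cmp C (cmp C h (arr F u w)) (arr F v u) = cmp C h (arr F v w)"
proof -
  note obj = diagram_obj[OF diagram_F] and arr = diagram_arr[OF diagram_F]
  have "cmp C (cmp C h (arr F u w)) (arr F v u) = cmp C h (cmp C (arr F u w) (arr F v u))"
    using category_cmp_assoc[OF category obj[OF \<open>v \<in> Idx F\<close>] obj[OF \<open>u \<in> Idx F\<close>]
        obj[OF \<open>w \<in> Idx F\<close>] \<open>x \<in> Ob C\<close> arr[of v u] arr[of u w] \<open>h \<in> _\<close>] assms by simp
  also have "\<dots> = cmp C h (arr F v w)"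
    using diagram_arr_comp[OF diagram_F, of v u w] assms by simp
  finally show ?thesis .
qed

lemma mor_le_refl:
  assumes "one_mor C F G (\<alpha>, \<phi>)"
  shows "mor_le C F G (\<alpha>, \<phi>) (\<alpha>, \<phi>)"
  unfolding mor_le_def split
proof (intro ballI conjI)
  fix b assume b: "b \<in> Idx G"
  note \<alpha>b = one_mor_Idx[OF assms b]
  show "dle F (\<alpha> b) (\<alpha> b)" by (rule partial_order_on'_refl[OF order_F \<alpha>b])
  show "\<phi> b = cmp C (\<phi> b) (arr F (\<alpha> b) (\<alpha> b))"
    using diagram_arr_id[OF diagram_F \<alpha>b] category_cmp_idm_right[OF category
        diagram_obj[OF diagram_F \<alpha>b] diagram_obj[OF diagram_G b] one_mor_Hom[OF assms b]]
    by simp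
qed

lemma mor_le_trans:
  assumes "one_mor C F G (\<alpha>, \<phi>)" "one_mor C F G (\<beta>, \<psi>)" "one_mor C F G (\<gamma>, \<chi>)"
    and "mor_le C F G (\<alpha>, \<phi>) (\<beta>, \<psi>)" "mor_le C F G (\<beta>, \<psi>) (\<gamma>, \<chi>)"
  shows "mor_le C F G (\<alpha>, \<phi>) (\<gamma>, \<chi>)"
  unfolding mor_le_def split
proof (intro ballI conjI)
  fix b assume b: "b \<in> Idx G"
  have Idx: "\<alpha> b \<in> Idx F" "\<beta> b \<in> Idx F" "\<gamma> b \<in> Idx F"
    using assms(1-3) b by (auto intro: one_mor_Idx)
  note le1 = mor_leD[OF assms(4) b] and le2 = mor_leD[OF assms(5) b]
  show "dle F (\<alpha> b) (\<gamma> b)"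
    using partial_order_on'_trans[OF order_F Idx le1(1) le2(1)] .
  show "\<chi> b = cmp C (\<phi> b) (arr F (\<gamma> b) (\<alpha> b))"
    using le1 le2 cmp_arr_arr[OF diagram_obj[OF diagram_G b] one_mor_Hom[OF assms(1) b] Idx]
    by simp
qed

lemma one_mor_reindex:
  assumes m: "one_mor C F G (\<alpha>, \<phi>)"
    and above: "\<And>b. b \<in> Idx G \<Longrightarrow> \<gamma> b \<in> Idx F \<and> dle F (\<alpha> b) (\<gamma> b)"
    and strict: "\<And>b b'. b \<in> Idx G \<Longrightarrow> b' \<in> Idx G \<Longrightarrow> dless G b b' \<Longrightarrow> dless F (\<gamma> b) (\<gamma> b')"
  shows "one_mor C F G (reindex_mor C F \<alpha> \<phi> \<gamma>)"
  unfolding one_mor_def reindex_mor_def split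
proof (intro conjI ballI impI)
  fix b assume b: "b \<in> Idx G"
  show "\<gamma> b \<in> Idx F" using above b by blast
  show "cmp C (\<phi> b) (arr F (\<gamma> b) (\<alpha> b)) \<in> Hom C (obj F (\<gamma> b)) (obj G b)"
    using category_cmp_hom[OF category diagram_obj[OF diagram_F \<open>\<gamma> b \<in> Idx F\<close>]
        diagram_obj[OF diagram_F one_mor_Idx[OF m b]] diagram_obj[OF diagram_G b]
        diagram_arr[OF diagram_F \<open>\<gamma> b \<in> Idx F\<close> one_mor_Idx[OF m b]] one_mor_Hom[OF m b]]
      above b by blast
next
  fix b b' assume "b \<in> Idx G" "b' \<in> Idx G" "dless G b b'"
  then show "dless F (\<gamma> b) (\<gamma> b')" by (rule strict)
next
  fix b b' assume b: "b \<in> Idx G" and b': "b' \<in> Idx G" and "dle G b' b"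
  have Idx: "\<alpha> b \<in> Idx F" "\<alpha> b' \<in> Idx F" "\<gamma> b \<in> Idx F" "\<gamma> b' \<in> Idx F"
    using one_mor_Idx[OF m] above b b' by auto
  have "dle F (\<gamma> b') (\<gamma> b)"
    using strict[OF b' b] partial_order_on'_refl[OF order_F Idx(4)] \<open>dle G b' b\<close>
    unfolding dless_def by blast
  have "cmp C (arr G b b') (cmp C (\<phi> b) (arr F (\<gamma> b) (\<alpha> b)))
      = cmp C (cmp C (arr G b b') (\<phi> b)) (arr F (\<gamma> b) (\<alpha> b))"
    using category_cmp_assoc[OF category diagram_obj[OF diagram_F Idx(3)]
        diagram_obj[OF diagram_F Idx(1)] diagram_obj[OF diagram_G b] diagram_obj[OF diagram_G b']
        diagram_arr[OF diagram_F Idx(3) Idx(1)] one_mor_Hom[OF m b]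
        diagram_arr[OF diagram_G b b' \<open>dle G b' b\<close>]] above b by blast
  also have "\<dots> = cmp C (\<phi> b') (arr F (\<gamma> b) (\<alpha> b'))"
    using one_mor_natural[OF m b b' \<open>dle G b' b\<close>] cmp_arr_arr[OF diagram_obj[OF diagram_G b']
        one_mor_Hom[OF m b'] Idx(2,1,3)] one_mor_mono[OF m b b' \<open>dle G b' b\<close>] above b
    by simp
  also have "\<dots> = cmp C (cmp C (\<phi> b') (arr F (\<gamma> b') (\<alpha> b'))) (arr F (\<gamma> b) (\<gamma> b'))"
    using cmp_arr_arr[OF diagram_obj[OF diagram_G b'] one_mor_Hom[OF m b'] Idx(2,4,3)]
      above b' \<open>dle F (\<gamma> b') (\<gamma> b)\<close> by simp
  finally show "cmp C (arr G b b') (cmp C (\<phi> b) (arr F (\<gamma> b) (\<alpha> b)))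
      = cmp C (cmp C (\<phi> b') (arr F (\<gamma> b') (\<alpha> b'))) (arr F (\<gamma> b) (\<gamma> b'))" .
qed

lemma mor_le_reindex:
  assumes m: "one_mor C F G (\<alpha>, \<phi>)" and m1: "one_mor C F G (\<alpha>1, \<phi>1)"
    and le: "mor_le C F G (\<alpha>, \<phi>) (\<alpha>1, \<phi>1)"
    and above: "\<And>b. b \<in> Idx G \<Longrightarrow> \<gamma> b \<in> Idx F \<and> dle F (\<alpha>1 b) (\<gamma> b)"
  shows "mor_le C F G (\<alpha>1, \<phi>1) (reindex_mor C F \<alpha> \<phi> \<gamma>)"
  unfolding mor_le_def reindex_mor_def split
proof (intro ballI conjI)
  fix b assume b: "b \<in> Idx G"
  show "dle F (\<alpha>1 b) (\<gamma> b)" using above b by blast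
  show "cmp C (\<phi> b) (arr F (\<gamma> b) (\<alpha> b)) = cmp C (\<phi>1 b) (arr F (\<gamma> b) (\<alpha>1 b))"
    using mor_leD[OF le b] cmp_arr_arr[OF diagram_obj[OF diagram_G b] one_mor_Hom[OF m b]
        one_mor_Idx[OF m b] one_mor_Idx[OF m1 b]] above b
    by simp
qed

end

locale pro_context =
  fixes C :: "('o,'m) cat" and F :: "('a,'o,'m) diag" and G :: "('b,'o,'m) diag"
  assumes category: "category C" and pro_F: "pro_obj C F" and pro_G: "pro_obj C G"
begin

lemma directed_F: "directed_on (Idx F) (dle F)"
  and unbounded_F: "\<forall>x\<in>Idx F. \<exists>y\<in>Idx F. dle F x y \<and> x \<noteq> y"
  and order_G: "partial_order_on' (Idx G) (dle G)"
  and finite_lower_G: "\<forall>x\<in>Idx G. finite {z\<in>Idx G. dle G z x}"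
  using pro_F pro_G unfolding pro_obj_def cofinite_directed_infinite_height_def by blast+

sublocale one_mor_context
  using category pro_F pro_G
  unfolding one_mor_context_def pro_obj_def cofinite_directed_infinite_height_def by blast

lemma mor_amalgamation:
  assumes m: "one_mor C F G (\<alpha>, \<phi>)" and m1: "one_mor C F G (\<alpha>1, \<phi>1)"
    and m2: "one_mor C F G (\<alpha>2, \<phi>2)"
    and le1: "mor_le C F G (\<alpha>, \<phi>) (\<alpha>1, \<phi>1)" and le2: "mor_le C F G (\<alpha>, \<phi>) (\<alpha>2, \<phi>2)"
  shows "\<exists>c. one_mor C F G c \<and> mor_le C F G (\<alpha>1, \<phi>1) c \<and> mor_le C F G (\<alpha>2, \<phi>2) c"
proof -
  have "\<forall>b\<in>Idx G. \<exists>u. u \<in> Idx F \<and> dle F (\<alpha>1 b) u \<and> dle F (\<alpha>2 b) u"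
    using directed_F one_mor_Idx[OF m1] one_mor_Idx[OF m2] unfolding directed_on_def by blast
  then obtain f where f: "\<forall>b\<in>Idx G. f b \<in> Idx F \<and> dle F (\<alpha>1 b) (f b) \<and> dle F (\<alpha>2 b) (f b)"
    by (rule bchoice[THEN exE])
  have "f ` Idx G \<subseteq> Idx F" using f by blast
  then obtain \<gamma> where \<gamma>: "\<And>b. b \<in> Idx G \<Longrightarrow> \<gamma> b \<in> Idx F \<and> dle F (f b) (\<gamma> b)"
    and strict: "\<And>b b'. b \<in> Idx G \<Longrightarrow> b' \<in> Idx G \<Longrightarrow> dle G b b' \<Longrightarrow> b \<noteq> b' \<Longrightarrow>
      dle F (\<gamma> b) (\<gamma> b') \<and> \<gamma> b \<noteq> \<gamma> b'"
    using strict_mono_majorant[OF order_F directed_F unbounded_F order_G finite_lower_G] by blast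
  note trans = partial_order_on'_trans[OF order_F]
  have above: "\<gamma> b \<in> Idx F \<and> dle F (\<alpha>1 b) (\<gamma> b) \<and> dle F (\<alpha>2 b) (\<gamma> b)"
    if b: "b \<in> Idx G" for b
  proof -
    have "f b \<in> Idx F" "\<gamma> b \<in> Idx F" "dle F (f b) (\<gamma> b)" using f \<gamma> b by blast+
    then show ?thesis
      using trans[OF one_mor_Idx[OF m1 b] \<open>f b \<in> Idx F\<close> \<open>\<gamma> b \<in> Idx F\<close>]
        trans[OF one_mor_Idx[OF m2 b] \<open>f b \<in> Idx F\<close> \<open>\<gamma> b \<in> Idx F\<close>] f b by blast
  qed
  have above_\<alpha>: "\<gamma> b \<in> Idx F \<and> dle F (\<alpha> b) (\<gamma> b)" if b: "b \<in> Idx G" for b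
    using trans[OF one_mor_Idx[OF m b] one_mor_Idx[OF m1 b] conjunct1[OF above[OF b]]
        mor_leD(1)[OF le1 b]] above[OF b] by blast
  have "one_mor C F G (reindex_mor C F \<alpha> \<phi> \<gamma>)"
    by (rule one_mor_reindex[OF m above_\<alpha>]) (use strict in \<open>auto simp: dless_def\<close>)
  moreover have "mor_le C F G (\<alpha>1, \<phi>1) (reindex_mor C F \<alpha> \<phi> \<gamma>)"
    using mor_le_reindex[OF m m1 le1] above by blast
  moreover have "mor_le C F G (\<alpha>2, \<phi>2) (reindex_mor C F \<alpha> \<phi> \<gamma>)"
    using mor_le_reindex[OF m m2 le2] above by blast
  ultimately show ?thesis by blast
qed

sublocale amalgamating_preorder "one_mor C F G" "mor_le C F G"
proof
  show "mor_le C F G m m" if "one_mor C F G m" for m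
    using that mor_le_refl[of "fst m" "snd m"] by simp
  show "mor_le C F G x z"
    if "one_mor C F G x" "one_mor C F G y" "one_mor C F G z"
      "mor_le C F G x y" "mor_le C F G y z" for x y z
    using that mor_le_trans[of "fst x" "snd x" "fst y" "snd y" "fst z" "snd z"] by simp
  show "\<exists>c. one_mor C F G c \<and> mor_le C F G a c \<and> mor_le C F G b c"
    if "one_mor C F G x" "one_mor C F G a" "one_mor C F G b"
      "mor_le C F G x a" "mor_le C F G x b" for x a b
    using that mor_amalgamation[of "fst x" "snd x" "fst a" "snd a" "fst b" "snd b"] by simp
qed

end

theorem corollary3p7:
  fixes C :: "('o,'m) cat" and F :: "('a,'o,'m) diag" and G :: "('b,'o,'m) diag"
  assumes "category C" and "pro_obj C F" and "pro_obj C G"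
  shows "\<forall>K\<in>mor_components C F G. directed_on K (mor_le C F G)"
proof
  interpret pro_context C F G using assms by unfold_locales
  fix K assume "K \<in> mor_components C F G"
  then obtain m where "one_mor C F G m" and "K = {m'. mor_connected C F G m m'}"
    unfolding mor_components_def by blast
  moreover have "mor_connected C F G = zigzag"
    unfolding mor_connected_def zigzag_def ..
  ultimately show "directed_on K (mor_le C F G)"
    using directed_on_zigzag_component by simp
qed

end
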